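(* For $i=1,2$ let $P_i$ be an irreducible aperiodic transition matrix on the countable set $X_i$ with root $e_i$ satisfying a ratio limit theorem with kernel $h_i$ and ratio limit kernel $H_i(x_i,y_i)=h_i(x_i,y_i)/h_i(e_i,y_i)$; let $\partial_R X_i$ be the ratio limit boundary of $(X_i,P_i)$ and denote also by $H_i(x_i,\cdot)$ the continuous extensions to $\partial_R X_i$. Let $P=P_1\otimes P_2$ on $X=X_1\times X_2$, $p(x_1x_2,y_1y_2)=p_1(x_1,y_1)p_2(x_2,y_2)$, which satisfies a ratio limit theorem with $h(x_1x_2,y_1y_2)=h_1(x_1,y_1)h_2(x_2,y_2)$ and $H(x_1x_2,y_1y_2)=H_1(x_1,y_1)H_2(x_2,y_2)$. On the product boundary $B=(\partial_R X_1\times\partial_R X_2)\cup(X_1\times\partial_R X_2)\cup(\partial_R X_1\times X_2)$ define $\eta_1\eta_2\approx\zeta_1\zeta_2$ iff $H_1(x_1,\eta_1)H_2(x_2,\eta_2)=H_1(x_1,\zeta_1)H_2(x_2,\zeta_2)$ for all $x_1x_2\in X_1\times X_2$ (where $H_i(x_i,y_i)$ for $y_i\in X_i$ is the original kernel). Then the ratio limit boundary of $(X,P)$ is the image of the product boundary $B$ (inside the product compactification of the two ratio limit compactifications) under the factor map of $\approx$, and the extension of $H(x_1x_2,\cdot)$ to it is $H(x_1x_2,\xi)=H_1(x_1,\eta_1)H_2(x_2,\eta_2)$ for any representative $\eta_1\eta_2$ of the class $\xi$.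
   Context: Ratio limit theorem for an irreducible aperiodic transition matrix $P$ on a countable set $X$ with root $e$: $h(x,y)=\lim_n p^{(n)}(x,y)/p^{(n)}(e,e)\in(0,\infty)$ exists for all $x,y$; ratio limit kernel $H(x,y)=h(x,y)/h(e,y)$. The ratio limit compactification is the unique (up to homeomorphism fixing $X$) compact Hausdorff space containing $X$ as discrete open dense subset to which every $H(x,\cdot)$ extends continuously and whose boundary points (points outside $X$, forming the ratio limit boundary) are separated by these extensions. Product compactification of compactifications $\mathcal C(X_1),\mathcal C(X_2)$ with boundaries $\partial X_i$: the space $\mathcal C(X_1)\times\mathcal C(X_2)$ with product topology; its boundary is $(\partial X_1\times\partial X_2)\cup(X_1\times\partial X_2)\cup(\partial X_1\times X_2)$; elements are written $w_1w_2$. *)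

theory Defs
  imports "HOL-Analysis.Analysis"
begin

definition transition_matrix :: "('a \<Rightarrow> 'a \<Rightarrow> real) \<Rightarrow> bool" where
  "transition_matrix P \<longleftrightarrow> (\<forall>x y. 0 \<le> P x y) \<and> (\<forall>x. ((\<lambda>y. P x y) has_sum 1) UNIV)"

fun mpow :: "('a \<Rightarrow> 'a \<Rightarrow> real) \<Rightarrow> nat \<Rightarrow> 'a \<Rightarrow> 'a \<Rightarrow> real" where
  "mpow P 0 x y = (if x = y then 1 else 0)"
| "mpow P (Suc n) x y = (\<Sum>\<^sub>\<infinity>z. P x z * mpow P n z y)"

definition irreducible_mc :: "('a \<Rightarrow> 'a \<Rightarrow> real) \<Rightarrow> bool" where
  "irreducible_mc P \<longleftrightarrow> (\<forall>x y. \<exists>n. 0 < mpow P n x y)"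

definition aperiodic_mc :: "('a \<Rightarrow> 'a \<Rightarrow> real) \<Rightarrow> 'a \<Rightarrow> bool" where
  "aperiodic_mc P e \<longleftrightarrow> Gcd {n. 0 < mpow P n e e} = 1"

definition ratio_limit_thm :: "('a \<Rightarrow> 'a \<Rightarrow> real) \<Rightarrow> 'a \<Rightarrow> ('a \<Rightarrow> 'a \<Rightarrow> real) \<Rightarrow> bool" where
  "ratio_limit_thm P e h \<longleftrightarrow>
     (\<forall>x y. 0 < h x y \<and> ((\<lambda>n. mpow P n x y / mpow P n e e) \<longlongrightarrow> h x y) sequentially)"

definition rl_kernel :: "('a \<Rightarrow> 'a \<Rightarrow> real) \<Rightarrow> 'a \<Rightarrow> 'a \<Rightarrow> 'a \<Rightarrow> real" where
  "rl_kernel P e x y = lim (\<lambda>n. mpow P n x y / mpow P n e e) / lim (\<lambda>n. mpow P n e y / mpow P n e e)"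

text \<open>(T, iota, G) is a ratio limit compactification of (X,P) with root e:
  T compact Hausdorff, iota embeds X as a discrete open dense subset, G x is the
  continuous extension of H(x,.), and the G x separate boundary points.\<close>
definition rl_compactification ::
  "('a \<Rightarrow> 'a \<Rightarrow> real) \<Rightarrow> 'a \<Rightarrow> 't topology \<Rightarrow> ('a \<Rightarrow> 't) \<Rightarrow> ('a \<Rightarrow> 't \<Rightarrow> real) \<Rightarrow> bool" where
  "rl_compactification P e T \<iota> G \<longleftrightarrow>
     compact_space T \<and> Hausdorff_space T \<and>
     inj \<iota> \<and> range \<iota> \<subseteq> topspace T \<and>
     (\<forall>x. openin T {\<iota> x}) \<and>
     T closure_of (range \<iota>) = topspace T \<and>
     (\<forall>x. continuous_map T euclideanreal (G x)) \<and>
     (\<forall>x y. G x (\<iota> y) = rl_kernel P e x y) \<and>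
     (\<forall>a\<in>topspace T - range \<iota>. \<forall>b\<in>topspace T - range \<iota>. a \<noteq> b \<longrightarrow> (\<exists>x. G x a \<noteq> G x b))"

definition prod_matrix :: "('a \<Rightarrow> 'a \<Rightarrow> real) \<Rightarrow> ('b \<Rightarrow> 'b \<Rightarrow> real) \<Rightarrow> ('a \<times> 'b) \<Rightarrow> ('a \<times> 'b) \<Rightarrow> real" where
  "prod_matrix P1 P2 x y = P1 (fst x) (fst y) * P2 (snd x) (snd y)"

text \<open>Quotient topology on the set of equivalence classes; the factor map is z \<mapsto> R``{z}.\<close>
definition quotient_topology :: "'a topology \<Rightarrow> ('a \<times> 'a) set \<Rightarrow> 'a set topology" where
  "quotient_topology T R = topology (\<lambda>U. U \<subseteq> topspace T // R \<and> openin T (\<Union>U))"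

definition prod_bdry_rel ::
  "'s topology \<Rightarrow> 't topology \<Rightarrow> ('a \<Rightarrow> 's) \<Rightarrow> ('b \<Rightarrow> 't) \<Rightarrow> ('a \<Rightarrow> 's \<Rightarrow> real) \<Rightarrow> ('b \<Rightarrow> 't \<Rightarrow> real)
   \<Rightarrow> (('s \<times> 't) \<times> ('s \<times> 't)) set" where
  "prod_bdry_rel T1 T2 \<iota>1 \<iota>2 G1 G2 =
     (let C = topspace T1 \<times> topspace T2; B = C - (range \<iota>1 \<times> range \<iota>2) in
      {(a, b). a \<in> C \<and> b \<in> C \<and>
        (a = b \<or> (a \<in> B \<and> b \<in> B \<and>
          (\<forall>x1 x2. G1 x1 (fst a) * G2 x2 (snd a) = G1 x1 (fst b) * G2 x2 (snd b))))})"

end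

theory Submission
  imports Defs
begin

text \<open>The n-step probabilities of the product chain factorise, so its ratio limits and its ratio
  limit kernel are the products of those of the factors. In the product compactification the point
  set X1 x X2 is open, dense and discrete and the kernels H1 H2 are continuous. Collapsing the boundary
  points that these kernels do not separate yields a compact space (a continuous image) that is
  Hausdorff: points of X1 x X2 stay isolated and closed, and distinct boundary classes are separated
  by the descended kernels. So the quotient satisfies the defining properties of the ratio limit
  compactification.\<close>

lemma mpow_nonneg_le_one:
  assumes "transition_matrix P"
  shows "0 \<le> mpow P n x y \<and> mpow P n x y \<le> 1"
proof (induction n arbitrary: x)
  case 0
  then show ?case by simp
next
  case (Suc n)
  have P_nonneg: "\<And>z. 0 \<le> P x z" and P_sum: "((\<lambda>z. P x z) has_sum 1) UNIV"
    using assms unfolding transition_matrix_def by auto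
  then have P_summable: "(\<lambda>z. P x z) summable_on UNIV"
    by (auto simp: summable_on_def)
  have summable: "(\<lambda>z. P x z * mpow P n z y) summable_on UNIV"
    by (rule summable_on_comparison_test[OF P_summable]) (use Suc P_nonneg in \<open>auto intro: mult_left_le\<close>)
  have "(\<Sum>\<^sub>\<infinity>z. P x z * mpow P n z y) \<le> (\<Sum>\<^sub>\<infinity>z. P x z)"
    by (rule infsum_mono[OF summable P_summable]) (use Suc P_nonneg in \<open>auto intro: mult_left_le\<close>)
  also have "\<dots> = 1"
    using P_sum by (simp add: infsumI)
  finally show ?case
    using Suc P_nonneg by (auto intro!: infsum_nonneg)
qed

lemma has_sum_mpow_Suc:
  assumes "transition_matrix P"
  shows "((\<lambda>z. P x z * mpow P n z y) has_sum mpow P (Suc n) x y) UNIV"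
proof -
  have "(\<lambda>z. P x z) summable_on UNIV"
    using assms by (auto simp: transition_matrix_def summable_on_def)
  then have "(\<lambda>z. P x z * mpow P n z y) summable_on UNIV"
    by (rule summable_on_comparison_test)
      (use assms mpow_nonneg_le_one[OF assms] in \<open>auto simp: transition_matrix_def intro: mult_left_le\<close>)
  then show ?thesis
    by (simp add: has_sum_infsum)
qed

lemma has_sum_mult_fst_snd_nonneg:
  fixes a :: "'a \<Rightarrow> real" and b :: "'b \<Rightarrow> real"
  assumes "(a has_sum A) UNIV" "(b has_sum B) UNIV" "\<And>z. 0 \<le> a z" "\<And>z. 0 \<le> b z"
  shows "((\<lambda>z. a (fst z) * b (snd z)) has_sum (A * B)) UNIV"
proof -
  have inner: "((\<lambda>z2. a z1 * b z2) has_sum a z1 * B) UNIV" for z1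
    using assms(2) by (rule has_sum_cmult_right)
  have outer: "((\<lambda>z1. a z1 * B) has_sum A * B) UNIV"
    using assms(1) by (rule has_sum_cmult_left)
  have "(\<lambda>z. a (fst z) * b (snd z)) summable_on UNIV \<times> UNIV"
    by (rule summable_on_SigmaI[where g = "\<lambda>z1. a z1 * B"])
      (use inner outer assms in \<open>auto simp: summable_on_def\<close>)
  then have "((\<lambda>z. a (fst z) * b (snd z)) has_sum (A * B)) (UNIV \<times> UNIV)"
    by (intro has_sum_SigmaI[where g = "\<lambda>z1. a z1 * B"]) (use inner outer in auto)
  then show ?thesis
    by simp
qed

lemma mpow_prod_matrix:
  assumes "transition_matrix P1" "transition_matrix P2"
  shows "mpow (prod_matrix P1 P2) n x y = mpow P1 n (fst x) (fst y) * mpow P2 n (snd x) (snd y)"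
proof (induction n arbitrary: x)
  case 0
  then show ?case by (cases x; cases y) auto
next
  case (Suc n)
  let ?f = "\<lambda>z. P1 (fst x) (fst z) * mpow P1 n (fst z) (fst y) * (P2 (snd x) (snd z) * mpow P2 n (snd z) (snd y))"
  have "(?f has_sum mpow P1 (Suc n) (fst x) (fst y) * mpow P2 (Suc n) (snd x) (snd y)) UNIV"
    using assms mpow_nonneg_le_one[OF assms(1)] mpow_nonneg_le_one[OF assms(2)]
    by (intro has_sum_mult_fst_snd_nonneg has_sum_mpow_Suc) (auto simp: transition_matrix_def)
  moreover have "(\<lambda>z. prod_matrix P1 P2 x z * mpow (prod_matrix P1 P2) n z y) = ?f"
    by (simp add: Suc prod_matrix_def mult_ac)
  ultimately show ?case
    unfolding mpow.simps(2)[of "prod_matrix P1 P2"] by (simp only: infsumI)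
qed

lemma ratio_limit_thm_prod_matrix:
  assumes "transition_matrix P1" "ratio_limit_thm P1 e1 h1"
    and "transition_matrix P2" "ratio_limit_thm P2 e2 h2"
  shows "ratio_limit_thm (prod_matrix P1 P2) (e1, e2) (\<lambda>x y. h1 (fst x) (fst y) * h2 (snd x) (snd y))"
  unfolding ratio_limit_thm_def
proof (intro allI conjI)
  fix x y :: "'a \<times> 'b"
  show "0 < h1 (fst x) (fst y) * h2 (snd x) (snd y)"
    using assms unfolding ratio_limit_thm_def by simp
  have "(\<lambda>n. mpow P1 n (fst x) (fst y) / mpow P1 n e1 e1 * (mpow P2 n (snd x) (snd y) / mpow P2 n e2 e2))
      \<longlonglongrightarrow> h1 (fst x) (fst y) * h2 (snd x) (snd y)"
    using assms unfolding ratio_limit_thm_def by (intro tendsto_mult) auto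
  then show "(\<lambda>n. mpow (prod_matrix P1 P2) n x y / mpow (prod_matrix P1 P2) n (e1, e2) (e1, e2))
      \<longlonglongrightarrow> h1 (fst x) (fst y) * h2 (snd x) (snd y)"
    by (simp add: mpow_prod_matrix assms(1,3) times_divide_times_eq)
qed

lemma rl_kernel_ratio_limit:
  assumes "ratio_limit_thm P e h"
  shows "rl_kernel P e x y = h x y / h e y"
proof -
  have "lim (\<lambda>n. mpow P n a b / mpow P n e e) = h a b" for a b
    using assms unfolding ratio_limit_thm_def by (blast intro: limI)
  then show ?thesis
    unfolding rl_kernel_def by simp
qed

lemma rl_kernel_prod_matrix:
  assumes "transition_matrix P1" "ratio_limit_thm P1 e1 h1"
    and "transition_matrix P2" "ratio_limit_thm P2 e2 h2"
  shows "rl_kernel (prod_matrix P1 P2) (e1, e2) x y =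
           rl_kernel P1 e1 (fst x) (fst y) * rl_kernel P2 e2 (snd x) (snd y)"
  by (simp add: rl_kernel_ratio_limit[OF ratio_limit_thm_prod_matrix[OF assms]]
      rl_kernel_ratio_limit[OF assms(2)] rl_kernel_ratio_limit[OF assms(4)] times_divide_times_eq)

lemma openin_quotient_topology:
  assumes "equiv (topspace T) R"
  shows "openin (quotient_topology T R) U \<longleftrightarrow> U \<subseteq> topspace T // R \<and> openin T (\<Union>U)"
proof -
  have "\<Union>(S \<inter> V) = \<Union>S \<inter> \<Union>V" if "S \<subseteq> topspace T // R" "V \<subseteq> topspace T // R" for S V
    using quotient_disj[OF assms] that by blast
  moreover have "openin T (\<Union>(\<Union>K))" if "\<forall>S\<in>K. openin T (\<Union>S)" for K
  proof -
    have "\<Union>(\<Union>K) = \<Union>(Union ` K)"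
      by auto
    then show ?thesis
      using that by auto
  qed
  ultimately have "istopology (\<lambda>U. U \<subseteq> topspace T // R \<and> openin T (\<Union>U))"
    unfolding istopology_def by auto
  then show ?thesis
    unfolding quotient_topology_def by simp
qed

lemma topspace_quotient_topology:
  assumes "equiv (topspace T) R"
  shows "topspace (quotient_topology T R) = topspace T // R"
proof (rule subset_antisym)
  show "topspace (quotient_topology T R) \<subseteq> topspace T // R"
    using openin_quotient_topology[OF assms] by (metis openin_topspace)
  show "topspace T // R \<subseteq> topspace (quotient_topology T R)"
    using openin_quotient_topology[OF assms] Union_quotient[OF assms] by (simp add: openin_subset)
qed

lemma quotient_map_quotient_topology:
  assumes "equiv (topspace T) R"
  shows "quotient_map T (quotient_topology T R) (\<lambda>z. R``{z})"
  unfolding quotient_map_def topspace_quotient_topology[OF assms]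
proof (intro conjI allI impI)
  show "(\<lambda>z. R``{z}) ` topspace T = topspace T // R"
    by (auto simp: quotient_def)
next
  fix U assume U: "U \<subseteq> topspace T // R"
  have "{x \<in> topspace T. R``{x} \<in> U} = \<Union>U"
    using U equiv_class_self[OF assms] equiv_class_eq[OF assms] in_quotient_imp_subset[OF assms]
    by (auto elim!: quotientE) (metis subsetD)
  then show "openin T {x \<in> topspace T. R``{x} \<in> U} = openin (quotient_topology T R) U"
    using openin_quotient_topology[OF assms] U by simp
qed

text \<open>Evaluates f at an arbitrary representative, so it is meaningful only when f respects the
  relation of which D is a class.\<close>
definition on_class :: "('t \<Rightarrow> 'r) \<Rightarrow> 't set \<Rightarrow> 'r" where
  "on_class f D = f (SOME z. z \<in> D)"

lemma on_class_Image:
  assumes "equiv A R" "f respects R" "z \<in> A"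
  shows "on_class f (R``{z}) = f z"
proof -
  have "(SOME w. w \<in> R``{z}) \<in> R``{z}"
    using equiv_class_self[OF assms(1,3)] by (rule someI)
  then have "(z, SOME w. w \<in> R``{z}) \<in> R"
    by simp
  then show ?thesis
    unfolding on_class_def by (auto dest: congruentD[OF assms(2)])
qed

lemma separated_by_continuous_real:
  assumes "continuous_map Q euclideanreal g" "a \<in> topspace Q" "b \<in> topspace Q" "g a \<noteq> g b"
  shows "\<exists>U V. openin Q U \<and> openin Q V \<and> a \<in> U \<and> b \<in> V \<and> disjnt U V"
proof -
  obtain U V where UV: "openin euclideanreal U" "openin euclideanreal V" "g a \<in> U" "g b \<in> V" "disjnt U V"
    using Hausdorff_space_euclidean[where 'a = real, unfolded Hausdorff_space_def, rule_format, of "g a" "g b"] assms(4)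
    by auto
  show ?thesis
  proof (intro exI conjI)
    show "openin Q {x \<in> topspace Q. g x \<in> U}" "openin Q {x \<in> topspace Q. g x \<in> V}"
      using UV(1,2) by (simp_all add: openin_continuous_map_preimage[OF assms(1)])
    show "disjnt {x \<in> topspace Q. g x \<in> U} {x \<in> topspace Q. g x \<in> V}"
      using UV(5) by (auto simp: disjnt_def)
  qed (use assms(2,3) UV(3,4) in auto)
qed

lemma Hausdorff_space_if_isolated_or_separated:
  assumes isolated: "\<And>a. a \<in> A \<Longrightarrow> openin Q {a} \<and> closedin Q {a}"
    and continuous: "\<And>x. continuous_map Q euclideanreal (f x)"
    and separating: "\<And>a b. a \<in> topspace Q - A \<Longrightarrow> b \<in> topspace Q - A \<Longrightarrow> a \<noteq> b \<Longrightarrow> \<exists>x. f x a \<noteq> f x b"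
  shows "Hausdorff_space Q"
proof -
  have isolated_separated: "\<exists>U V. openin Q U \<and> openin Q V \<and> a \<in> U \<and> b \<in> V \<and> disjnt U V"
    if "a \<in> A" "b \<in> topspace Q" "a \<noteq> b" for a b
    using isolated[OF that(1)] that(2,3)
    by (intro exI[of _ "{a}"] exI[of _ "topspace Q - {a}"]) (auto simp: disjnt_def)
  show ?thesis
    unfolding Hausdorff_space_def
  proof (intro allI impI)
    fix a b assume ab: "a \<in> topspace Q \<and> b \<in> topspace Q \<and> a \<noteq> b"
    consider "a \<in> A" | "b \<in> A" | "a \<notin> A" "b \<notin> A"
      by blast
    then show "\<exists>U V. openin Q U \<and> openin Q V \<and> a \<in> U \<and> b \<in> V \<and> disjnt U V"
    proof cases
      case 1
      then show ?thesis using isolated_separated ab by blast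
    next
      case 2
      then obtain U V where "openin Q U" "openin Q V" "b \<in> U" "a \<in> V" "disjnt U V"
        using isolated_separated[of b a] ab by blast
      then show ?thesis
        by (meson disjnt_sym)
    next
      case 3
      then obtain x where "f x a \<noteq> f x b"
        using separating ab by blast
      then show ?thesis
        using separated_by_continuous_real[OF continuous] ab by blast
    qed
  qed
qed

definition boundary_kernel_rel :: "'t topology \<Rightarrow> 't set \<Rightarrow> ('x \<Rightarrow> 't \<Rightarrow> real) \<Rightarrow> ('t \<times> 't) set" where
  "boundary_kernel_rel T I F =
     {(a, b). a \<in> topspace T \<and> b \<in> topspace T \<and> (a = b \<or> (a \<notin> I \<and> b \<notin> I \<and> (\<forall>x. F x a = F x b)))}"

lemma equiv_boundary_kernel_rel: "equiv (topspace T) (boundary_kernel_rel T I F)"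
  unfolding equiv_def refl_on_def sym_def trans_def boundary_kernel_rel_def by auto

lemma boundary_kernel_rel_respects: "F x respects boundary_kernel_rel T I F"
  unfolding congruent_def boundary_kernel_rel_def by auto

locale boundary_kernel_compactum =
  fixes T :: "'t topology" and I :: "'t set" and F :: "'x \<Rightarrow> 't \<Rightarrow> real"
  assumes compact: "compact_space T" and Hausdorff: "Hausdorff_space T"
    and I_subset: "I \<subseteq> topspace T" and isolated: "\<And>p. p \<in> I \<Longrightarrow> openin T {p}"
    and dense: "T closure_of I = topspace T"
    and continuous: "\<And>x. continuous_map T euclideanreal (F x)"
begin

abbreviation R :: "('t \<times> 't) set" where "R \<equiv> boundary_kernel_rel T I F"
abbreviation Q :: "'t set topology" where "Q \<equiv> quotient_topology T R"
abbreviation q :: "'t \<Rightarrow> 't set" where "q z \<equiv> R``{z}"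

lemma equiv_R: "equiv (topspace T) R"
  by (rule equiv_boundary_kernel_rel)

lemma quotient_map_q: "quotient_map T Q q"
  by (rule quotient_map_quotient_topology[OF equiv_R])

lemma q_isolated: "p \<in> I \<Longrightarrow> q p = {p}"
  using I_subset by (auto simp: boundary_kernel_rel_def)

lemma topspace_Q_eq: "topspace Q = q ` topspace T"
  using quotient_imp_surjective_map[OF quotient_map_q] by simp

lemma topspace_Q_minus_isolated: "topspace Q - q ` I = q ` (topspace T - I)"
proof -
  have "q z \<notin> q ` I" if z: "z \<in> topspace T" "z \<notin> I" for z
  proof
    assume "q z \<in> q ` I"
    then obtain p where "p \<in> I" "q z = q p"
      by blast
    then have "z \<in> {p}"
      using equiv_class_self[OF equiv_R z(1)] q_isolated by simp
    then show False
      using z(2) \<open>p \<in> I\<close> by simp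
  qed
  then show ?thesis
    unfolding topspace_Q_eq by blast
qed

lemma on_class_q: "z \<in> topspace T \<Longrightarrow> on_class (F x) (q z) = F x z"
  by (rule on_class_Image[OF equiv_R boundary_kernel_rel_respects])

lemma continuous_map_on_class: "continuous_map Q euclideanreal (on_class (F x))"
proof (rule continuous_compose_quotient_map[OF quotient_map_q])
  show "continuous_map T euclideanreal (on_class (F x) \<circ> q)"
    by (rule continuous_map_eq[OF continuous[of x]]) (simp add: on_class_q)
qed

lemma on_class_separating:
  assumes "a \<in> topspace Q - q ` I" "b \<in> topspace Q - q ` I" "a \<noteq> b"
  shows "\<exists>x. on_class (F x) a \<noteq> on_class (F x) b"
proof -
  obtain z w where zw: "z \<in> topspace T - I" "w \<in> topspace T - I" "a = q z" "b = q w"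
    using assms(1,2) unfolding topspace_Q_minus_isolated by blast
  then have "(z, w) \<notin> R"
    using assms(3) equiv_class_eq[OF equiv_R] by blast
  then obtain x where "F x z \<noteq> F x w"
    using zw(1,2) assms(3) zw(3,4) by (auto simp: boundary_kernel_rel_def)
  then show ?thesis
    using zw by (auto simp: on_class_q)
qed

lemma compact_space_Q: "compact_space Q"
  using image_compactin[OF compact[unfolded compact_space_def] quotient_imp_continuous_map[OF quotient_map_q]]
  by (simp add: compact_space_def topspace_Q_eq)

lemma isolated_Q:
  assumes p: "p \<in> I"
  shows "openin Q {q p} \<and> closedin Q {q p}"
proof -
  have p_T: "p \<in> topspace T"
    using p I_subset by blast
  have "z = p" if "z \<in> topspace T" "q z = q p" for z
    using equiv_class_self[OF equiv_R that(1)] that(2) q_isolated[OF p] by simp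
  then have preimage: "{z \<in> topspace T. q z \<in> {q p}} = {p}"
    using p_T by blast
  have sub: "{q p} \<subseteq> topspace Q"
    using p_T topspace_Q_eq by blast
  show ?thesis
    using quotient_map_q[unfolded quotient_map_def, THEN conjunct2, rule_format, OF sub]
      quotient_map_q[unfolded quotient_map_closedin, THEN conjunct2, rule_format, OF sub]
      isolated[OF p] closedin_t1_singleton[OF Hausdorff_imp_t1_space[OF Hausdorff] p_T]
    unfolding preimage by simp
qed

lemma Hausdorff_space_Q: "Hausdorff_space Q"
  by (rule Hausdorff_space_if_isolated_or_separated[where A = "q ` I", OF _ continuous_map_on_class on_class_separating])
    (use isolated_Q in blast)

lemma dense_Q: "Q closure_of (q ` I) = topspace Q"
proof (rule subset_antisym)
  show "topspace Q \<subseteq> Q closure_of (q ` I)"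
    using continuous_map_image_closure_subset[OF quotient_imp_continuous_map[OF quotient_map_q], of I]
    by (simp add: dense topspace_Q_eq)
qed (rule closure_of_subset_topspace)

lemma rl_compactification_Q:
  assumes "inj \<iota>" "range \<iota> = I" "\<And>x y. F x (\<iota> y) = rl_kernel P e x y"
  shows "rl_compactification P e Q (\<lambda>y. q (\<iota> y)) (\<lambda>x. on_class (F x))"
proof -
  have inj_q_\<iota>: "inj (\<lambda>y. q (\<iota> y))"
    using assms(1,2) q_isolated by (auto simp: inj_def)
  have range_q_\<iota>: "range (\<lambda>y. q (\<iota> y)) = q ` I"
    using assms(2) by auto
  have isolated_q_\<iota>: "openin Q {q (\<iota> y)}" for y
    using assms(2) isolated_Q by blast
  have kernel_q_\<iota>: "on_class (F x) (q (\<iota> y)) = rl_kernel P e x y" for x y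
  proof -
    have "\<iota> y \<in> topspace T"
      using assms(2) I_subset by blast
    then show ?thesis
      using on_class_q assms(3) by simp
  qed
  show ?thesis
    unfolding rl_compactification_def range_q_\<iota>
  proof (intro conjI allI)
    show "q ` I \<subseteq> topspace Q"
      using I_subset topspace_Q_eq by auto
    show "\<forall>a\<in>topspace Q - q ` I. \<forall>b\<in>topspace Q - q ` I. a \<noteq> b \<longrightarrow> (\<exists>x. on_class (F x) a \<noteq> on_class (F x) b)"
      using on_class_separating by blast
  qed (fact compact_space_Q Hausdorff_space_Q dense_Q continuous_map_on_class inj_q_\<iota> isolated_q_\<iota> kernel_q_\<iota>)+
qed

end

lemma rl_compactificationD:
  assumes "rl_compactification P e T \<iota> G"
  shows "compact_space T" "Hausdorff_space T" "inj \<iota>" "range \<iota> \<subseteq> topspace T" "openin T {\<iota> y}"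
    "T closure_of range \<iota> = topspace T" "continuous_map T euclideanreal (G x)"
    "G x (\<iota> y) = rl_kernel P e x y"
  using assms unfolding rl_compactification_def by auto

lemma prod_bdry_rel_eq_boundary_kernel_rel:
  "prod_bdry_rel T1 T2 \<iota>1 \<iota>2 G1 G2 =
     boundary_kernel_rel (prod_topology T1 T2) (range \<iota>1 \<times> range \<iota>2) (\<lambda>x z. G1 (fst x) (fst z) * G2 (snd x) (snd z))"
  by (auto simp: prod_bdry_rel_def boundary_kernel_rel_def Let_def)

lemma boundary_kernel_compactum_prod:
  assumes c1: "rl_compactification P1 e1 T1 \<iota>1 G1" and c2: "rl_compactification P2 e2 T2 \<iota>2 G2"
  shows "boundary_kernel_compactum (prod_topology T1 T2) (range \<iota>1 \<times> range \<iota>2)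
           (\<lambda>x z. G1 (fst x) (fst z) * G2 (snd x) (snd z))"
proof unfold_locales
  show "compact_space (prod_topology T1 T2)" "Hausdorff_space (prod_topology T1 T2)"
    using rl_compactificationD(1,2)[OF c1] rl_compactificationD(1,2)[OF c2]
    by (simp_all add: compact_space_prod_topology Hausdorff_space_prod_topology)
  show "range \<iota>1 \<times> range \<iota>2 \<subseteq> topspace (prod_topology T1 T2)"
    "prod_topology T1 T2 closure_of (range \<iota>1 \<times> range \<iota>2) = topspace (prod_topology T1 T2)"
    using rl_compactificationD(4,6)[OF c1] rl_compactificationD(4,6)[OF c2]
    by (auto simp: closure_of_Times)
  show "openin (prod_topology T1 T2) {p}" if p: "p \<in> range \<iota>1 \<times> range \<iota>2" for p
  proof -
    obtain a b where ab: "p = (\<iota>1 a, \<iota>2 b)"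
      using p by blast
    have "openin (prod_topology T1 T2) ({\<iota>1 a} \<times> {\<iota>2 b})"
      using rl_compactificationD(5)[OF c1] rl_compactificationD(5)[OF c2] openin_prod_Times_iff by blast
    then show ?thesis
      by (simp add: ab)
  qed
  show "continuous_map (prod_topology T1 T2) euclideanreal (\<lambda>z. G1 (fst x) (fst z) * G2 (snd x) (snd z))" for x
    using continuous_map_compose[OF continuous_map_fst rl_compactificationD(7)[OF c1]]
      continuous_map_compose[OF continuous_map_snd rl_compactificationD(7)[OF c2]]
    by (intro continuous_map_real_mult) (simp_all add: o_def)
qed

theorem lemma5p1:
  fixes P1 :: "'a::countable \<Rightarrow> 'a \<Rightarrow> real" and e1 :: 'a and h1 :: "'a \<Rightarrow> 'a \<Rightarrow> real"
    and P2 :: "'b::countable \<Rightarrow> 'b \<Rightarrow> real" and e2 :: 'b and h2 :: "'b \<Rightarrow> 'b \<Rightarrow> real"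
    and T1 :: "'s topology" and \<iota>1 :: "'a \<Rightarrow> 's" and G1 :: "'a \<Rightarrow> 's \<Rightarrow> real"
    and T2 :: "'t topology" and \<iota>2 :: "'b \<Rightarrow> 't" and G2 :: "'b \<Rightarrow> 't \<Rightarrow> real"
  assumes "transition_matrix P1" "irreducible_mc P1" "aperiodic_mc P1 e1" "ratio_limit_thm P1 e1 h1"
    and "transition_matrix P2" "irreducible_mc P2" "aperiodic_mc P2 e2" "ratio_limit_thm P2 e2 h2"
    and "rl_compactification P1 e1 T1 \<iota>1 G1"
    and "rl_compactification P2 e2 T2 \<iota>2 G2"
  shows "let P = prod_matrix P1 P2; e = (e1, e2);
             R = prod_bdry_rel T1 T2 \<iota>1 \<iota>2 G1 G2;
             Q = quotient_topology (prod_topology T1 T2) R;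
             q = (\<lambda>z. R `` {z});
             \<iota> = (\<lambda>x. q (\<iota>1 (fst x), \<iota>2 (snd x)));
             B = topspace T1 \<times> topspace T2 - (range \<iota>1 \<times> range \<iota>2)
         in ratio_limit_thm P e (\<lambda>x y. h1 (fst x) (fst y) * h2 (snd x) (snd y)) \<and>
            topspace Q - range \<iota> = q ` B \<and>
            (\<exists>G. rl_compactification P e Q \<iota> G \<and>
                 (\<forall>x \<xi>. \<xi> \<in> B \<longrightarrow> G x (q \<xi>) = G1 (fst x) (fst \<xi>) * G2 (snd x) (snd \<xi>)))"
proof -
  let ?F = "\<lambda>x z. G1 (fst x) (fst z) * G2 (snd x) (snd z)"
  let ?\<iota> = "\<lambda>y. (\<iota>1 (fst y), \<iota>2 (snd y))"
  interpret boundary_kernel_compactum "prod_topology T1 T2" "range \<iota>1 \<times> range \<iota>2" ?F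
    using assms(9,10) by (rule boundary_kernel_compactum_prod)
  have ratio: "ratio_limit_thm (prod_matrix P1 P2) (e1, e2) (\<lambda>x y. h1 (fst x) (fst y) * h2 (snd x) (snd y))"
    using assms(1,4,5,8) by (rule ratio_limit_thm_prod_matrix)
  have "inj ?\<iota>"
    using rl_compactificationD(3)[OF assms(9)] rl_compactificationD(3)[OF assms(10)] by (auto simp: inj_def)
  moreover have range_\<iota>: "range ?\<iota> = range \<iota>1 \<times> range \<iota>2"
    by (auto simp: image_iff)
  moreover have "?F x (?\<iota> y) = rl_kernel (prod_matrix P1 P2) (e1, e2) x y" for x y
    by (simp add: rl_compactificationD(8)[OF assms(9)] rl_compactificationD(8)[OF assms(10)]
        rl_kernel_prod_matrix[OF assms(1,4,5,8)])
  ultimately have compactification: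
    "rl_compactification (prod_matrix P1 P2) (e1, e2) Q (\<lambda>y. q (?\<iota> y)) (\<lambda>x. on_class (?F x))"
    by (rule rl_compactification_Q)
  have "range (\<lambda>y. q (?\<iota> y)) = q ` (range \<iota>1 \<times> range \<iota>2)"
    unfolding range_\<iota>[symmetric] by (simp add: image_image)
  then have boundary: "topspace Q - range (\<lambda>y. q (?\<iota> y)) = q ` (topspace T1 \<times> topspace T2 - range \<iota>1 \<times> range \<iota>2)"
    using topspace_Q_minus_isolated by simp
  have extension: "\<forall>x \<xi>. \<xi> \<in> topspace T1 \<times> topspace T2 - range \<iota>1 \<times> range \<iota>2 \<longrightarrow> on_class (?F x) (q \<xi>) = ?F x \<xi>"
    using on_class_q by simp
  show ?thesis
    unfolding Let_def prod_bdry_rel_eq_boundary_kernel_rel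
    by (intro conjI exI[of _ "\<lambda>x. on_class (?F x)"] ratio boundary compactification extension)
qed

end
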